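(* For every constant specification $\mathsf{CS}$ for $\mathsf{LPC}^+$ there exist formulas $\phi,\psi$ and a term $t$ such that $\models_{\mathsf{LPC}^+_{\mathsf{CS}}}\phi\equiv\psi$ but $\not\models_{\mathsf{LPC}^+_{\mathsf{CS}}} t{:}\phi\equiv t{:}\psi$. (Indeed one may take $\phi=p$, $\psi=p\wedge p$ and $t=x$ a justification variable.)
   Context: Language: countable sets $\mathsf{Const}$, $\mathsf{Var}$, $\mathsf{Prop}$; terms $t ::= c \mid x \mid t\cdot t \mid t+t \mid\ !t$; formulas $\phi ::= p \mid \neg\phi \mid \phi\wedge\phi \mid \phi\supset\phi \mid \phi>\phi \mid t{:}\phi$; $\mathsf{Tm},\mathsf{Fm}$ the sets of terms and formulas; $\phi\equiv\psi:=(\phi\supset\psi)\wedge(\psi\supset\phi)$. A constant specification $\mathsf{CS}$ is a set of formulas $c{:}\phi$ with $c\in\mathsf{Const}$ and $\phi$ an instance of the axiom schemes (A1) classical tautologies, (A2) $(\phi>(\psi\supset\chi))\supset((\phi>\psi)\supset(\phi>\chi))$, (A3) $\phi>\phi$, (A4) $(\phi>\psi)\supset(\phi\supset\psi)$, (A5) $(s{:}(\phi>\psi)\wedge t{:}\phi) > (s\cdot t){:}\psi$, (A6) $s{:}\phi > (s+t){:}\phi$, (A7) $t{:}\phi>(s+t){:}\phi$, (A8) $t{:}\phi>\phi$, (A9) $t{:}\phi > (!t){:}t{:}\phi$. A relational model is $\mathcal M=(W,W_N,R_{Fm},R_{Tm},V)$: $W$ a nonempty set, $W_N\subseteq W$ nonempty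 (normal states); $R_{Fm}$ assigns to each $\phi\in\mathsf{Fm}$ a relation $R_\phi\subseteq W_N\times W_N$; $R_{Tm}$ assigns to each $t\in\mathsf{Tm}$ a relation $R_t\subseteq W\times W$; $V$ assigns to each normal state $w$ a set $V(w)\subseteq\mathsf{Prop}$ and to each $w\in W\setminus W_N$ a set $V(w)\subseteq\mathsf{Fm}$. $R_\phi(w)$, $R_t(w)$ denote the sets of successors. Truth: at $w\in W\setminus W_N$, $\mathcal M,w\models\phi$ iff $\phi\in V(w)$; at $w\in W_N$: $p$ iff $p\in V(w)$; $\neg,\wedge,\supset$ classically; $\phi>\psi$ iff $R_\phi(w)\subseteq[\psi]$; $t{:}\phi$ iff $R_t(w)\subseteq[\phi]$, where $[\phi]=\{w\in W:\mathcal M,w\models\phi\}$. $\mathcal M$ is an $\mathsf{LPC}^+_{\mathsf{CS}}$-model if for all $w\in W_N$: (1) $R_\phi(w)\subseteq[\phi]$ for all $\phi$; (2) if $w\in[\phi]$ then $w\in R_\phi(w)$; (3) $R_c(w)\subseteq[\phi]$ for each $c{:}\phi\in\mathsf{CS}$; (4) $R_{s+t}(w)\subseteq R_s(w)\cap R_t(w)$; (5) for all $v\in R_{s\cdot t}(w)$ and all $\phi,\psi$: if $w\in[s{:}(\phi>\psi)\wedge t{:}\phi]$ then $v\in[\psi]$; (6) $wR_tw$ for all $t$; (7) for all $t$ and $v,u\in W$, if $wR_{!t}v$ and $vR_tu$ then $wR_tu$. $\models_{\mathsf{LPC}^+_{\mathsf{CS}}}\phi$ means $\phi$ is true at every normal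 state of every $\mathsf{LPC}^+_{\mathsf{CS}}$-model. *)

theory Defs
  imports Main
begin

(* Const, Var, Prop: countable sets, represented by nat *)
datatype tm = Cst nat | Vr nat | App tm tm | Sum tm tm | Bang tm

datatype fm = Atom nat | Neg fm | Conj fm fm | Imp fm fm
  | Cond fm fm
  | Just tm fm

definition Equiv :: "fm \<Rightarrow> fm \<Rightarrow> fm" where
  "Equiv a b = Conj (Imp a b) (Imp b a)"

(* classical tautologies: formulas true under every boolean assignment to
   the propositionally atomic formulas (atoms, conditionals, justification formulas) *)
fun pval :: "(fm \<Rightarrow> bool) \<Rightarrow> fm \<Rightarrow> bool" where
  "pval v (Neg a) = (\<not> pval v a)"
| "pval v (Conj a b) = (pval v a \<and> pval v b)"
| "pval v (Imp a b) = (pval v a \<longrightarrow> pval v b)"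
| "pval v a = v a"

definition tautology :: "fm \<Rightarrow> bool" where
  "tautology a = (\<forall>v. pval v a)"

inductive axiom :: "fm \<Rightarrow> bool" where
  A1: "tautology a \<Longrightarrow> axiom a"
| A2: "axiom (Imp (Cond a (Imp b c)) (Imp (Cond a b) (Cond a c)))"
| A3: "axiom (Cond a a)"
| A4: "axiom (Imp (Cond a b) (Imp a b))"
| A5: "axiom (Cond (Conj (Just s (Cond a b)) (Just t a)) (Just (App s t) b))"
| A6: "axiom (Cond (Just s a) (Just (Sum s t) a))"
| A7: "axiom (Cond (Just t a) (Just (Sum s t) a))"
| A8: "axiom (Cond (Just t a) a)"
| A9: "axiom (Cond (Just t a) (Just (Bang t) (Just t a)))"

definition const_spec :: "fm set \<Rightarrow> bool" where
  "const_spec CS = (\<forall>f\<in>CS. \<exists>c a. f = Just (Cst c) a \<and> axiom a)"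

record 'w model =
  W :: "'w set"
  WN :: "'w set"
  RF :: "fm \<Rightarrow> ('w \<times> 'w) set"
  RT :: "tm \<Rightarrow> ('w \<times> 'w) set"
  VP :: "'w \<Rightarrow> nat set"
  VF :: "'w \<Rightarrow> fm set"

fun sat :: "'w model \<Rightarrow> 'w \<Rightarrow> fm \<Rightarrow> bool" where
  "sat M w (Atom p) = (if w \<in> WN M then p \<in> VP M w else Atom p \<in> VF M w)"
| "sat M w (Neg a) = (if w \<in> WN M then \<not> sat M w a else Neg a \<in> VF M w)"
| "sat M w (Conj a b) = (if w \<in> WN M then sat M w a \<and> sat M w b else Conj a b \<in> VF M w)"
| "sat M w (Imp a b) = (if w \<in> WN M then (sat M w a \<longrightarrow> sat M w b) else Imp a b \<in> VF M w)"
| "sat M w (Cond a b) = (if w \<in> WN M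
      then (\<forall>v. (w, v) \<in> RF M a \<longrightarrow> v \<in> W M \<and> sat M v b)
      else Cond a b \<in> VF M w)"
| "sat M w (Just t a) = (if w \<in> WN M
      then (\<forall>v. (w, v) \<in> RT M t \<longrightarrow> v \<in> W M \<and> sat M v a)
      else Just t a \<in> VF M w)"

definition ext :: "'w model \<Rightarrow> fm \<Rightarrow> 'w set" where
  "ext M a = {w \<in> W M. sat M w a}"

definition succ :: "('w \<times> 'w) set \<Rightarrow> 'w \<Rightarrow> 'w set" where
  "succ R w = {v. (w, v) \<in> R}"

definition is_model :: "'w model \<Rightarrow> bool" where
  "is_model M = (W M \<noteq> {} \<and> WN M \<subseteq> W M \<and> WN M \<noteq> {}
     \<and> (\<forall>a. RF M a \<subseteq> WN M \<times> WN M)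
     \<and> (\<forall>t. RT M t \<subseteq> W M \<times> W M))"

definition LPC_model :: "fm set \<Rightarrow> 'w model \<Rightarrow> bool" where
  "LPC_model CS M = (is_model M \<and> (\<forall>w\<in>WN M.
       (\<forall>a. succ (RF M a) w \<subseteq> ext M a)
     \<and> (\<forall>a. w \<in> ext M a \<longrightarrow> w \<in> succ (RF M a) w)
     \<and> (\<forall>c a. Just (Cst c) a \<in> CS \<longrightarrow> succ (RT M (Cst c)) w \<subseteq> ext M a)
     \<and> (\<forall>s t. succ (RT M (Sum s t)) w \<subseteq> succ (RT M s) w \<inter> succ (RT M t) w)
     \<and> (\<forall>s t a b. \<forall>v\<in>succ (RT M (App s t)) w.
           w \<in> ext M (Conj (Just s (Cond a b)) (Just t a)) \<longrightarrow> v \<in> ext M b)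
     \<and> (\<forall>t. (w, w) \<in> RT M t)
     \<and> (\<forall>t v u. (w, v) \<in> RT M (Bang t) \<and> (v, u) \<in> RT M t \<longrightarrow> (w, u) \<in> RT M t)))"

(* validity w.r.t. all LPC+_CS models whose states are drawn from type 'w *)
definition valid :: "'w itself \<Rightarrow> fm set \<Rightarrow> fm \<Rightarrow> bool" where
  "valid _ CS a = (\<forall>M :: 'w model. LPC_model CS M \<longrightarrow> (\<forall>w\<in>WN M. sat M w a))"

end

theory Submission
  imports Defs
begin

text \<open>The formulas \<open>p\<close> and \<open>p \<and> p\<close> are classically equivalent, so their equivalence
holds at every normal state. But non-normal states may evaluate \<open>p \<and> p\<close> arbitrarily:
a model with one normal state \<open>0\<close> and one non-normal state \<open>1\<close> at which every formula
except \<open>p \<and> p\<close> is true, with \<open>1\<close> reachable from \<open>0\<close> exactly along variables, satisfies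
all conditions on \<open>LPC\<^sup>+\<^sub>C\<^sub>S\<close>-models (constants only reach \<open>0\<close>, and \<open>p \<and> p\<close> is not an
axiom), yet makes \<open>x:p\<close> true and \<open>x:(p \<and> p)\<close> false at \<open>0\<close>.\<close>

lemma pval_sat_normal: "w \<in> WN M \<Longrightarrow> pval (sat M w) a = sat M w a"
  by (induction "sat M w" a rule: pval.induct) auto

lemma valid_tautology: "tautology a \<Longrightarrow> valid TYPE('w) CS a"
  unfolding valid_def tautology_def by (metis LPC_model_def is_model_def pval_sat_normal)

lemma tautology_Equiv_Atom_Conj_self: "tautology (Equiv (Atom p) (Conj (Atom p) (Atom p)))"
  by (simp add: tautology_def Equiv_def)

lemma not_axiom_Conj_Atom_self: "\<not> axiom (Conj (Atom p) (Atom p))"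
proof
  assume "axiom (Conj (Atom p) (Atom p))"
  then show False
  proof cases
    case A1
    then show ?thesis by (auto simp: tautology_def dest: spec[of _ "\<lambda>_. False"])
  qed
qed

fun is_var :: "tm \<Rightarrow> bool" where
  "is_var (Vr _) = True"
| "is_var _ = False"

text \<open>Truth at the normal state \<open>0\<close> of the countermodel below.\<close>
fun countermodel_val :: "nat \<Rightarrow> fm \<Rightarrow> bool" where
  "countermodel_val p (Atom _) = True"
| "countermodel_val p (Neg a) = (\<not> countermodel_val p a)"
| "countermodel_val p (Conj a b) = (countermodel_val p a \<and> countermodel_val p b)"
| "countermodel_val p (Imp a b) = (countermodel_val p a \<longrightarrow> countermodel_val p b)"
| "countermodel_val p (Cond a b) = (countermodel_val p a \<longrightarrow> countermodel_val p b)"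
| "countermodel_val p (Just t a) =
     (countermodel_val p a \<and> (is_var t \<longrightarrow> a \<noteq> Conj (Atom p) (Atom p)))"

definition countermodel :: "nat \<Rightarrow> nat model" where
  "countermodel p = \<lparr> W = {0, 1}, WN = {0},
     RF = (\<lambda>a. if countermodel_val p a then {(0, 0)} else {}),
     RT = (\<lambda>t. if is_var t then {(0, 0), (0, 1)} else {(0, 0)}),
     VP = (\<lambda>_. UNIV), VF = (\<lambda>_. UNIV - {Conj (Atom p) (Atom p)}) \<rparr>"

lemma countermodel_simps [simp]:
  "W (countermodel p) = {0, Suc 0}"
  "WN (countermodel p) = {0}"
  "RF (countermodel p) a = (if countermodel_val p a then {(0, 0)} else {})"
  "RT (countermodel p) t = (if is_var t then {(0, 0), (0, Suc 0)} else {(0, 0)})"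
  "VP (countermodel p) w = UNIV"
  "VF (countermodel p) w = UNIV - {Conj (Atom p) (Atom p)}"
  by (auto simp: countermodel_def)

lemma sat_countermodel_1: "sat (countermodel p) (Suc 0) a \<longleftrightarrow> a \<noteq> Conj (Atom p) (Atom p)"
  by (cases a) auto

lemma sat_countermodel_0: "sat (countermodel p) 0 a \<longleftrightarrow> countermodel_val p a"
  by (induction a) (auto simp: sat_countermodel_1)

lemma ext_countermodel:
  "ext (countermodel p) a =
     {w. (w = 0 \<and> countermodel_val p a) \<or> (w = Suc 0 \<and> a \<noteq> Conj (Atom p) (Atom p))}"
  by (auto simp: ext_def sat_countermodel_0 sat_countermodel_1)

lemma pval_countermodel_val: "pval (countermodel_val p) a = countermodel_val p a"
  by (induction "countermodel_val p" a rule: pval.induct) auto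

lemma countermodel_val_axiom: "axiom a \<Longrightarrow> countermodel_val p a"
proof (induction rule: axiom.induct)
  case (A1 a)
  then show ?case using pval_countermodel_val[of p a] by (auto simp: tautology_def)
next
  case (A9 t a)
  then show ?case by (cases t) auto
qed auto

lemma LPC_model_countermodel:
  assumes "const_spec CS"
  shows "LPC_model CS (countermodel p)"
proof -
  have "countermodel_val p a \<and> a \<noteq> Conj (Atom p) (Atom p)" if "Just (Cst c) a \<in> CS" for c a
    using assms that countermodel_val_axiom not_axiom_Conj_Atom_self
    unfolding const_spec_def by fastforce
  then show ?thesis
    unfolding LPC_model_def is_model_def by (simp add: succ_def ext_countermodel)
qed

lemma not_valid_Equiv_Just_Var_Atom_Conj_self:
  assumes "const_spec CS"
  shows "\<not> valid TYPE(nat) CS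
           (Equiv (Just (Vr x) (Atom p)) (Just (Vr x) (Conj (Atom p) (Atom p))))"
proof -
  have "\<not> sat (countermodel p) 0
           (Equiv (Just (Vr x) (Atom p)) (Just (Vr x) (Conj (Atom p) (Atom p))))"
    by (simp add: sat_countermodel_0 Equiv_def)
  then show ?thesis
    using LPC_model_countermodel[OF assms] unfolding valid_def by force
qed

theorem mainTheorem4:
  assumes "const_spec CS"
  shows "(\<exists>a b t. valid TYPE('w) CS (Equiv a b)
                  \<and> \<not> valid TYPE(nat) CS (Equiv (Just t a) (Just t b)))
       \<and> (\<forall>p x. valid TYPE('w) CS (Equiv (Atom p) (Conj (Atom p) (Atom p)))
                \<and> \<not> valid TYPE(nat) CS (Equiv (Just (Vr x) (Atom p)) (Just (Vr x) (Conj (Atom p) (Atom p)))))"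
  using valid_tautology[OF tautology_Equiv_Atom_Conj_self]
    not_valid_Equiv_Just_Var_Atom_Conj_self[OF assms] by blast

end
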